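(* Let $G$ be a digraph, let $i\le 0\le j$ be integers, and let $\Sigma$ be a set of balanced equations in some operation symbols. Then $G^{[i,j]}$ has idempotent polymorphisms satisfying $\Sigma$ if and only if $G$ has idempotent polymorphisms satisfying $\Sigma$.
   Context: Digraphs are finite and loopless. For a digraph $G=(V,E)$ and integers $i\le0\le j$, $G^{[i,j]}$ is the digraph on $\{i,\dots,-1\}\cup V\cup\{1,\dots,j\}$ (disjoint union) whose edges are: $u\to w$ for integers $u<w$ in $\{i,\dots,-1,1,\dots,j\}$; the edges of $E$; $u\to v$ for every integer $u<0$ and $v\in V$; $v\to u$ for every $v\in V$ and integer $u>0$. A polymorphism of arity $k$ is a map $f:V^k\to V$ with $(f(a_1,\dots,a_k),f(b_1,\dots,b_k))\in E$ whenever all $(a_i,b_i)\in E$; it is idempotent if $f(x,\dots,x)=x$. An equation $s(x_1,\dots,x_m)=t(y_1,\dots,y_n)$ is balanced if $\{x_1,\dots,x_m\}=\{y_1,\dots,y_n\}$. Polymorphisms satisfy $\Sigma$ if the equations hold for all values of the variables. *)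

theory Defs
  imports Main
begin

definition digraph :: "'a set \<Rightarrow> ('a \<times> 'a) set \<Rightarrow> bool" where
  "digraph V E \<longleftrightarrow> finite V \<and> E \<subseteq> V \<times> V \<and> (\<forall>v. (v, v) \<notin> E)"

definition ext_vertices :: "'a set \<Rightarrow> int \<Rightarrow> int \<Rightarrow> ('a + int) set" where
  "ext_vertices V i j = Inl ` V \<union> Inr ` ({i..-1} \<union> {1..j})"

definition ext_edges :: "'a set \<Rightarrow> ('a \<times> 'a) set \<Rightarrow> int \<Rightarrow> int \<Rightarrow> (('a + int) \<times> ('a + int)) set" where
  "ext_edges V E i j =
     {(Inr u, Inr w) | u w. u \<in> {i..-1} \<union> {1..j} \<and> w \<in> {i..-1} \<union> {1..j} \<and> u < w}
   \<union> {(Inl a, Inl b) | a b. (a, b) \<in> E}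
   \<union> {(Inr u, Inl v) | u v. u \<in> {i..-1} \<and> v \<in> V}
   \<union> {(Inl v, Inr u) | u v. u \<in> {1..j} \<and> v \<in> V}"

text \<open>A k-ary operation on V is represented as a function on lists; only its values on
  lists of length k with entries in V matter.\<close>
definition polymorphism :: "'a set \<Rightarrow> ('a \<times> 'a) set \<Rightarrow> nat \<Rightarrow> ('a list \<Rightarrow> 'a) \<Rightarrow> bool" where
  "polymorphism V E k f \<longleftrightarrow>
     (\<forall>xs. length xs = k \<and> set xs \<subseteq> V \<longrightarrow> f xs \<in> V) \<and>
     (\<forall>as bs. length as = k \<and> length bs = k \<and> set as \<subseteq> V \<and> set bs \<subseteq> V \<and>
        (\<forall>l<k. (as ! l, bs ! l) \<in> E) \<longrightarrow> (f as, f bs) \<in> E)"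

definition idempotent :: "'a set \<Rightarrow> nat \<Rightarrow> ('a list \<Rightarrow> 'a) \<Rightarrow> bool" where
  "idempotent V k f \<longleftrightarrow> (\<forall>x\<in>V. f (replicate k x) = x)"

text \<open>A height-1 equation s(x_1..x_m) = t(y_1..y_n) over operation symbols 's (with arity
  function ar) and variables 'v is a tuple (s, [x_1..x_m], t, [y_1..y_n]).\<close>
type_synonym ('s, 'v) equation = "'s \<times> 'v list \<times> 's \<times> 'v list"

definition well_formed_eq :: "('s \<Rightarrow> nat) \<Rightarrow> ('s, 'v) equation \<Rightarrow> bool" where
  "well_formed_eq ar e = (case e of (s, xs, t, ys) \<Rightarrow> length xs = ar s \<and> length ys = ar t)"

definition balanced :: "('s, 'v) equation \<Rightarrow> bool" where
  "balanced e = (case e of (s, xs, t, ys) \<Rightarrow> set xs = set ys)"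

definition satisfies_eq :: "'a set \<Rightarrow> ('s \<Rightarrow> 'a list \<Rightarrow> 'a) \<Rightarrow> ('s, 'v) equation \<Rightarrow> bool" where
  "satisfies_eq V I e = (case e of (s, xs, t, ys) \<Rightarrow>
     (\<forall>\<sigma>. (\<forall>x. \<sigma> x \<in> V) \<longrightarrow> I s (map \<sigma> xs) = I t (map \<sigma> ys)))"

definition has_idem_pols_satisfying ::
  "'a set \<Rightarrow> ('a \<times> 'a) set \<Rightarrow> ('s \<Rightarrow> nat) \<Rightarrow> ('s, 'v) equation set \<Rightarrow> bool" where
  "has_idem_pols_satisfying V E ar \<Sigma> \<longleftrightarrow>
     (\<exists>I. (\<forall>s. polymorphism V E (ar s) (I s) \<and> idempotent V (ar s) (I s)) \<and>
          (\<forall>e\<in>\<Sigma>. satisfies_eq V I e))"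

end

theory Submission
  imports Defs
begin

text \<open>An idempotent polymorphism \<open>f\<close> of \<open>G^[i,j]\<close> maps tuples from \<open>G\<close> into \<open>G\<close>:
  since \<open>-1\<close> has an edge to every vertex of \<open>G\<close>, so does \<open>-1 = f(-1,\<dots>,-1)\<close> to the value,
  which excludes negative values, and dually positive ones. So restricting to \<open>G\<close> preserves
  polymorphisms, idempotence and all equations. Conversely, a polymorphism \<open>f\<close> of \<open>G\<close>
  extends to \<open>G^[i,j]\<close> by returning the least negative argument if there is one, else the
  greatest positive argument, else the value of \<open>f\<close>. Outside \<open>G\<close> this depends only on the
  set of arguments, which is why balanced equations survive the extension.\<close>

lemma polymorphism_closed:
  "polymorphism V E k f \<Longrightarrow> length xs = k \<Longrightarrow> set xs \<subseteq> V \<Longrightarrow> f xs \<in> V"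
  unfolding polymorphism_def by blast

lemma polymorphism_edge:
  assumes "polymorphism V E k f" "length as = k" "length bs = k" "set as \<subseteq> V" "set bs \<subseteq> V"
    "\<And>l. l < k \<Longrightarrow> (as ! l, bs ! l) \<in> E"
  shows "(f as, f bs) \<in> E"
  using assms unfolding polymorphism_def by blast

lemma Inl_in_ext_vertices [simp]: "Inl v \<in> ext_vertices V i j \<longleftrightarrow> v \<in> V"
  unfolding ext_vertices_def by auto

lemma Inr_in_ext_vertices [simp]: "Inr u \<in> ext_vertices V i j \<longleftrightarrow> u \<in> {i..-1} \<union> {1..j}"
  unfolding ext_vertices_def by auto

lemma Inl_Inl_in_ext_edges [simp]: "(Inl a, Inl b) \<in> ext_edges V E i j \<longleftrightarrow> (a, b) \<in> E"
  unfolding ext_edges_def by auto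

lemma Inr_Inr_in_ext_edges [simp]:
  "(Inr u, Inr w) \<in> ext_edges V E i j \<longleftrightarrow>
     u \<in> {i..-1} \<union> {1..j} \<and> w \<in> {i..-1} \<union> {1..j} \<and> u < w"
  unfolding ext_edges_def by auto

lemma Inr_Inl_in_ext_edges [simp]: "(Inr u, Inl v) \<in> ext_edges V E i j \<longleftrightarrow> u \<in> {i..-1} \<and> v \<in> V"
  unfolding ext_edges_def by auto

lemma Inl_Inr_in_ext_edges [simp]: "(Inl v, Inr u) \<in> ext_edges V E i j \<longleftrightarrow> u \<in> {1..j} \<and> v \<in> V"
  unfolding ext_edges_def by auto

lemma ext_edge_into_negative:
  assumes "(x, Inr w) \<in> ext_edges V E i j" "w < 0"
  obtains u where "x = Inr u" "u < w"
  using assms by (cases x) auto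

lemma ext_edge_from_positive:
  assumes "(Inr u, y) \<in> ext_edges V E i j" "0 < u"
  obtains w where "y = Inr w" "u < w"
  using assms by (cases y) auto

lemma ext_edge_from_negative:
  assumes "u \<in> {i..-1}" "y \<in> ext_vertices V i j" "\<And>w. y = Inr w \<Longrightarrow> w < 0 \<Longrightarrow> u < w"
  shows "(Inr u, y) \<in> ext_edges V E i j"
  using assms by (cases y) force+

lemma ext_edge_to_positive:
  assumes "w \<in> {1..j}" "x \<in> ext_vertices V i j" "\<And>u. x = Inr u \<Longrightarrow> 0 < u \<Longrightarrow> u < w"
  shows "(x, Inr w) \<in> ext_edges V E i j"
  using assms by (cases x) force+

subsection \<open>Restricting polymorphisms of the extended digraph\<close>

definition restrict_op :: "(('a + int) list \<Rightarrow> 'a + int) \<Rightarrow> 'a list \<Rightarrow> 'a" where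
  "restrict_op f xs = projl (f (map Inl xs))"

lemma idempotent_polymorphism_preserves_base:
  assumes pol: "polymorphism (ext_vertices V i j) (ext_edges V E i j) k f"
    and idem: "idempotent (ext_vertices V i j) k f"
    and len: "length xs = k" and xs: "set xs \<subseteq> V"
  shows "f (map Inl xs) = Inl (restrict_op f xs) \<and> restrict_op f xs \<in> V"
proof -
  have xs': "set (map Inl xs) \<subseteq> ext_vertices V i j" using xs by auto
  have fx: "f (map Inl xs) \<in> ext_vertices V i j"
    using polymorphism_closed[OF pol _ xs'] len by simp
  have no_neg: False if "f (map Inl xs) = Inr u" "u < 0" for u
  proof -
    have "Inr (-1) \<in> ext_vertices V i j" using fx that by simp
    then have "(f (replicate k (Inr (-1))), f (map Inl xs)) \<in> ext_edges V E i j"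
      using xs xs' len by (intro polymorphism_edge[OF pol]) auto
    moreover have "f (replicate k (Inr (-1))) = Inr (-1)"
      using idem \<open>Inr (-1) \<in> ext_vertices V i j\<close> unfolding idempotent_def by blast
    ultimately show False using that by simp
  qed
  have no_pos: False if "f (map Inl xs) = Inr u" "0 < u" for u
  proof -
    have "Inr 1 \<in> ext_vertices V i j" using fx that by simp
    then have "(f (map Inl xs), f (replicate k (Inr 1))) \<in> ext_edges V E i j"
      using xs xs' len by (intro polymorphism_edge[OF pol]) auto
    moreover have "f (replicate k (Inr 1)) = Inr 1"
      using idem \<open>Inr 1 \<in> ext_vertices V i j\<close> unfolding idempotent_def by blast
    ultimately show False using that by simp
  qed
  show ?thesis
  proof (cases "f (map Inl xs)")
    case (Inr u)
    then have "u \<noteq> 0" using fx by auto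
    then show ?thesis using no_neg no_pos Inr by (cases "u < 0") auto
  qed (use fx in \<open>auto simp: restrict_op_def\<close>)
qed

lemma polymorphism_restrict_op:
  assumes pol: "polymorphism (ext_vertices V i j) (ext_edges V E i j) k f"
    and idem: "idempotent (ext_vertices V i j) k f"
  shows "polymorphism V E k (restrict_op f)"
  unfolding polymorphism_def
proof (intro conjI allI impI)
  fix xs :: "'a list" assume "length xs = k \<and> set xs \<subseteq> V"
  then show "restrict_op f xs \<in> V"
    using idempotent_polymorphism_preserves_base[OF pol idem] by blast
next
  fix as bs :: "'a list"
  assume asm: "length as = k \<and> length bs = k \<and> set as \<subseteq> V \<and> set bs \<subseteq> V \<and>
    (\<forall>l<k. (as ! l, bs ! l) \<in> E)"
  then have "(f (map Inl as), f (map Inl bs)) \<in> ext_edges V E i j"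
    by (intro polymorphism_edge[OF pol]) auto
  then show "(restrict_op f as, restrict_op f bs) \<in> E"
    using asm idempotent_polymorphism_preserves_base[OF pol idem] by force
qed

lemma idempotent_restrict_op:
  "idempotent (ext_vertices V i j) k f \<Longrightarrow> idempotent V k (restrict_op f)"
  unfolding idempotent_def restrict_op_def by (simp add: map_replicate)

lemma satisfies_eq_restrict_op:
  assumes "satisfies_eq (ext_vertices V i j) I e"
  shows "satisfies_eq V (\<lambda>s. restrict_op (I s)) e"
proof -
  obtain s xs t ys where e: "e = (s, xs, t, ys)" by (cases e)
  have "I s (map (Inl \<circ> \<sigma>) xs) = I t (map (Inl \<circ> \<sigma>) ys)" if "\<forall>x. \<sigma> x \<in> V" for \<sigma>
    using assms that unfolding e satisfies_eq_def by simp
  then show ?thesis unfolding e satisfies_eq_def restrict_op_def by simp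
qed

lemma has_idem_pols_satisfying_restrict:
  assumes "has_idem_pols_satisfying (ext_vertices V i j) (ext_edges V E i j) ar \<Sigma>"
  shows "has_idem_pols_satisfying V E ar \<Sigma>"
proof -
  obtain I where
      pol: "\<And>s. polymorphism (ext_vertices V i j) (ext_edges V E i j) (ar s) (I s)"
      and idem: "\<And>s. idempotent (ext_vertices V i j) (ar s) (I s)"
      and sat: "\<forall>e\<in>\<Sigma>. satisfies_eq (ext_vertices V i j) I e"
    using assms unfolding has_idem_pols_satisfying_def by blast
  show ?thesis unfolding has_idem_pols_satisfying_def
    using polymorphism_restrict_op[OF pol idem] idempotent_restrict_op[OF idem]
      satisfies_eq_restrict_op sat
    by (intro exI[of _ "\<lambda>s. restrict_op (I s)"]) blast
qed

subsection \<open>Extending polymorphisms of the base digraph\<close>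

definition neg_entries :: "('a + int) list \<Rightarrow> int set" where
  "neg_entries xs = {u. Inr u \<in> set xs \<and> u < 0}"

definition pos_entries :: "('a + int) list \<Rightarrow> int set" where
  "pos_entries xs = {u. Inr u \<in> set xs \<and> 0 < u}"

definition extend_op :: "('a list \<Rightarrow> 'a) \<Rightarrow> ('a + int) list \<Rightarrow> 'a + int" where
  "extend_op f xs =
     (if neg_entries xs \<noteq> {} then Inr (Min (neg_entries xs))
      else if pos_entries xs \<noteq> {} then Inr (Max (pos_entries xs))
      else Inl (f (map projl xs)))"

lemma finite_neg_entries [simp]: "finite (neg_entries xs)"
  unfolding neg_entries_def
  by (rule finite_subset[of _ "Inr -` set xs"]) (auto intro: finite_vimageI simp: inj_def)

lemma finite_pos_entries [simp]: "finite (pos_entries xs)"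
  unfolding pos_entries_def
  by (rule finite_subset[of _ "Inr -` set xs"]) (auto intro: finite_vimageI simp: inj_def)

lemma neg_entries_subset:
  "set xs \<subseteq> ext_vertices V i j \<Longrightarrow> neg_entries xs \<subseteq> {i..-1}"
  unfolding neg_entries_def by auto

lemma pos_entries_subset:
  "set xs \<subseteq> ext_vertices V i j \<Longrightarrow> pos_entries xs \<subseteq> {1..j}"
  unfolding pos_entries_def by auto

lemma base_entries:
  assumes "set xs \<subseteq> ext_vertices V i j" "neg_entries xs = {}" "pos_entries xs = {}"
  shows "xs = map Inl (map projl xs)" "set (map projl xs) \<subseteq> V"
proof -
  have "\<exists>v\<in>V. x = Inl v" if "x \<in> set xs" for x
  proof (cases x)
    case (Inr u)
    then have "u \<noteq> 0" using assms(1) that by auto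
    then show ?thesis using assms(2,3) that Inr unfolding neg_entries_def pos_entries_def
      by (auto simp: neq_iff)
  qed (use assms(1) that in auto)
  then show "xs = map Inl (map projl xs)" "set (map projl xs) \<subseteq> V"
    by (force intro: map_idI[symmetric])+
qed

lemma extend_op_in_ext_vertices:
  assumes "polymorphism V E k f" "length xs = k" "set xs \<subseteq> ext_vertices V i j"
  shows "extend_op f xs \<in> ext_vertices V i j"
proof (cases "neg_entries xs = {} \<and> pos_entries xs = {}")
  case True
  then show ?thesis
    using polymorphism_closed[OF assms(1)] base_entries[OF assms(3)] assms(2)
    unfolding extend_op_def by simp
next
  case False
  then have "extend_op f xs \<in> set xs"
    using Min_in[OF finite_neg_entries] Max_in[OF finite_pos_entries]
    unfolding extend_op_def neg_entries_def pos_entries_def by auto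
  then show ?thesis using assms(3) by blast
qed

lemma extend_op_negative:
  assumes "extend_op f xs = Inr u" "u < 0"
  shows "neg_entries xs \<noteq> {}" "u = Min (neg_entries xs)"
proof -
  have "0 < Max (pos_entries xs)" if "pos_entries xs \<noteq> {}"
    using Max_in[OF finite_pos_entries that] unfolding pos_entries_def by blast
  then show "neg_entries xs \<noteq> {}" "u = Min (neg_entries xs)"
    using assms unfolding extend_op_def by (auto split: if_splits)
qed

lemma extend_op_positive:
  assumes "extend_op f xs = Inr u" "0 < u"
  shows "neg_entries xs = {}" "pos_entries xs \<noteq> {}" "u = Max (pos_entries xs)"
proof -
  have "Min (neg_entries xs) < 0" if "neg_entries xs \<noteq> {}"
    using Min_in[OF finite_neg_entries that] unfolding neg_entries_def by blast
  then show "neg_entries xs = {}" "pos_entries xs \<noteq> {}" "u = Max (pos_entries xs)"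
    using assms unfolding extend_op_def by (auto split: if_splits)
qed

lemma neg_entries_descend:
  assumes "length as = k" "length bs = k"
    and "\<And>l. l < k \<Longrightarrow> (as ! l, bs ! l) \<in> ext_edges V E i j"
    and "w \<in> neg_entries bs"
  shows "\<exists>u\<in>neg_entries as. u < w"
proof -
  obtain l where l: "l < k" "bs ! l = Inr w" and "w < 0"
    using assms(2,4) unfolding neg_entries_def by (auto simp: in_set_conv_nth)
  then obtain u where "as ! l = Inr u" "u < w"
    using assms(3) by (metis ext_edge_into_negative)
  then show ?thesis
    using \<open>w < 0\<close> l(1) assms(1) nth_mem[of l as] unfolding neg_entries_def by force
qed

lemma pos_entries_ascend:
  assumes "length as = k" "length bs = k"
    and "\<And>l. l < k \<Longrightarrow> (as ! l, bs ! l) \<in> ext_edges V E i j"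
    and "u \<in> pos_entries as"
  shows "\<exists>w\<in>pos_entries bs. u < w"
proof -
  obtain l where l: "l < k" "as ! l = Inr u" and "0 < u"
    using assms(1,4) unfolding pos_entries_def by (auto simp: in_set_conv_nth)
  then obtain w where "bs ! l = Inr w" "u < w"
    using assms(3) by (metis ext_edge_from_positive)
  then show ?thesis
    using \<open>0 < u\<close> l(1) assms(2) nth_mem[of l bs] unfolding pos_entries_def by force
qed

lemma polymorphism_extend_op:
  assumes pol: "polymorphism V E k f"
  shows "polymorphism (ext_vertices V i j) (ext_edges V E i j) k (extend_op f)"
  unfolding polymorphism_def
proof (intro conjI allI impI)
  fix xs :: "('a + int) list" assume "length xs = k \<and> set xs \<subseteq> ext_vertices V i j"
  then show "extend_op f xs \<in> ext_vertices V i j"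
    using extend_op_in_ext_vertices[OF pol] by blast
next
  fix as bs :: "('a + int) list"
  assume "length as = k \<and> length bs = k \<and> set as \<subseteq> ext_vertices V i j \<and>
    set bs \<subseteq> ext_vertices V i j \<and> (\<forall>l<k. (as ! l, bs ! l) \<in> ext_edges V E i j)"
  then have la: "length as = k" and lb: "length bs = k"
    and sa: "set as \<subseteq> ext_vertices V i j" and sb: "set bs \<subseteq> ext_vertices V i j"
    and edges: "\<And>l. l < k \<Longrightarrow> (as ! l, bs ! l) \<in> ext_edges V E i j" by auto
  note descend = neg_entries_descend[OF la lb edges]
  note ascend = pos_entries_ascend[OF la lb edges]
  show "(extend_op f as, extend_op f bs) \<in> ext_edges V E i j"
  proof (cases "neg_entries as = {}")
    case False
    let ?m = "Min (neg_entries as)"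
    have "?m \<in> {i..-1}" using Min_in[OF _ False] neg_entries_subset[OF sa] by auto
    moreover have "?m < w" if "extend_op f bs = Inr w" "w < 0" for w
    proof -
      have "w \<in> neg_entries bs"
        using extend_op_negative[OF that] Min_in[of "neg_entries bs"] by simp
      then obtain u where "u \<in> neg_entries as" "u < w" using descend by blast
      then show ?thesis using Min_le[OF finite_neg_entries, of u as] by linarith
    qed
    ultimately have "(Inr ?m, extend_op f bs) \<in> ext_edges V E i j"
      using ext_edge_from_negative extend_op_in_ext_vertices[OF pol lb sb] by blast
    then show ?thesis using False unfolding extend_op_def[of f as] by simp
  next
    case neg_as: True
    then have neg_bs: "neg_entries bs = {}" using descend by blast
    show ?thesis
    proof (cases "pos_entries bs = {}")
      case False
      let ?M = "Max (pos_entries bs)"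
      have "?M \<in> {1..j}" using Max_in[OF _ False] pos_entries_subset[OF sb] by auto
      moreover have "u < ?M" if "extend_op f as = Inr u" "0 < u" for u
      proof -
        have "u \<in> pos_entries as"
          using extend_op_positive[OF that] Max_in[of "pos_entries as"] by simp
        then obtain w where "w \<in> pos_entries bs" "u < w" using ascend by blast
        then show ?thesis using Max_ge[OF finite_pos_entries, of w bs] by linarith
      qed
      ultimately have "(extend_op f as, Inr ?M) \<in> ext_edges V E i j"
        using ext_edge_to_positive extend_op_in_ext_vertices[OF pol la sa] by blast
      then show ?thesis using neg_bs False unfolding extend_op_def[of f bs] by simp
    next
      case pos_bs: True
      then have pos_as: "pos_entries as = {}" using ascend by blast
      note base_as = base_entries[OF sa neg_as pos_as]
      note base_bs = base_entries[OF sb neg_bs pos_bs]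
      have "(map projl as ! l, map projl bs ! l) \<in> E" if "l < k" for l
      proof -
        have "(map Inl (map projl as) ! l, map Inl (map projl bs) ! l) \<in> ext_edges V E i j"
          using edges[OF that] base_as(1) base_bs(1) by simp
        then show ?thesis using that la lb by simp
      qed
      then have "(f (map projl as), f (map projl bs)) \<in> E"
        using polymorphism_edge[OF pol] base_as(2) base_bs(2) la lb by simp
      then show ?thesis using neg_as neg_bs pos_as pos_bs unfolding extend_op_def by simp
    qed
  qed
qed

lemma idempotent_extend_op:
  assumes idem: "idempotent V k f" and "0 < k"
  shows "idempotent (ext_vertices V i j) k (extend_op f)"
  unfolding idempotent_def
proof
  fix x assume "x \<in> ext_vertices V i j"
  moreover have "set (replicate k x) = {x}" using \<open>0 < k\<close> by simp
  ultimately show "extend_op f (replicate k x) = x"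
    using idem unfolding extend_op_def neg_entries_def pos_entries_def idempotent_def
    by (cases x) (auto simp: map_replicate cong: conj_cong)
qed

lemma satisfies_eq_on_variables:
  assumes "satisfies_eq V I (s, xs, t, ys)" "V \<noteq> {}"
    and "\<And>x. x \<in> set xs \<union> set ys \<Longrightarrow> \<tau> x \<in> V"
  shows "I s (map \<tau> xs) = I t (map \<tau> ys)"
proof -
  obtain v where "v \<in> V" using assms(2) by blast
  define \<tau>' where "\<tau>' x = (if x \<in> set xs \<union> set ys then \<tau> x else v)" for x
  have "I s (map \<tau>' xs) = I t (map \<tau>' ys)"
    using assms(1,3) \<open>v \<in> V\<close> unfolding satisfies_eq_def \<tau>'_def by simp
  moreover have "map \<tau>' xs = map \<tau> xs" "map \<tau>' ys = map \<tau> ys"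
    unfolding \<tau>'_def by simp_all
  ultimately show ?thesis by simp
qed

lemma satisfies_eq_extend_op:
  fixes xs ys :: "'v list"
  assumes sat: "satisfies_eq V I (s, xs, t, ys)"
    and bal: "set xs = set ys" and "xs \<noteq> []"
  shows "satisfies_eq (ext_vertices V i j) (\<lambda>s. extend_op (I s)) (s, xs, t, ys)"
  unfolding satisfies_eq_def prod.case
proof (intro allI impI)
  fix \<sigma> :: "'v \<Rightarrow> 'a + int" assume "\<forall>x. \<sigma> x \<in> ext_vertices V i j"
  then have sx: "set (map \<sigma> xs) \<subseteq> ext_vertices V i j" by auto
  have neg: "neg_entries (map \<sigma> xs) = neg_entries (map \<sigma> ys)"
    and pos: "pos_entries (map \<sigma> xs) = pos_entries (map \<sigma> ys)"
    unfolding neg_entries_def pos_entries_def using bal by simp_all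
  show "extend_op (I s) (map \<sigma> xs) = extend_op (I t) (map \<sigma> ys)"
  proof (cases "neg_entries (map \<sigma> xs) = {} \<and> pos_entries (map \<sigma> xs) = {}")
    case True
    have "projl (\<sigma> x) \<in> V" if "x \<in> set xs \<union> set ys" for x
      using base_entries(2)[OF sx] True that bal by auto
    moreover have "V \<noteq> {}" using calculation \<open>xs \<noteq> []\<close> by (cases xs) auto
    ultimately have "I s (map (projl \<circ> \<sigma>) xs) = I t (map (projl \<circ> \<sigma>) ys)"
      by (intro satisfies_eq_on_variables[OF sat]) auto
    then show ?thesis using True neg pos unfolding extend_op_def by simp
  qed (use neg pos in \<open>simp add: extend_op_def\<close>)
qed

lemma has_idem_pols_satisfying_extend:
  assumes "has_idem_pols_satisfying V E ar \<Sigma>"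
    and arity: "\<forall>s. 0 < ar s"
    and eqs: "\<forall>e\<in>\<Sigma>. well_formed_eq ar e \<and> balanced e"
  shows "has_idem_pols_satisfying (ext_vertices V i j) (ext_edges V E i j) ar \<Sigma>"
proof -
  obtain I where pol: "\<And>s. polymorphism V E (ar s) (I s)"
      and idem: "\<And>s. idempotent V (ar s) (I s)"
      and sat: "\<forall>e\<in>\<Sigma>. satisfies_eq V I e"
    using assms(1) unfolding has_idem_pols_satisfying_def by blast
  have "satisfies_eq (ext_vertices V i j) (\<lambda>s. extend_op (I s)) e" if "e \<in> \<Sigma>" for e
  proof -
    obtain s xs t ys where e: "e = (s, xs, t, ys)" by (cases e)
    have "set xs = set ys" "length xs = ar s"
      using eqs that unfolding e balanced_def well_formed_eq_def by auto
    moreover have "satisfies_eq V I (s, xs, t, ys)" using sat that unfolding e by blast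
    ultimately show ?thesis
      unfolding e using satisfies_eq_extend_op arity[rule_format, of s] by force
  qed
  moreover have "idempotent (ext_vertices V i j) (ar s) (extend_op (I s))" for s
    using idempotent_extend_op[OF idem] arity by blast
  ultimately show ?thesis unfolding has_idem_pols_satisfying_def
    using polymorphism_extend_op[OF pol] by (intro exI[of _ "\<lambda>s. extend_op (I s)"]) blast
qed

theorem proposition4p7:
  fixes V :: "'a set" and E :: "('a \<times> 'a) set" and i j :: int
    and ar :: "'s \<Rightarrow> nat" and \<Sigma> :: "('s, 'v) equation set"
  assumes "digraph V E"
    and "i \<le> 0" and "0 \<le> j"
    and "\<forall>s. 0 < ar s"
    and "\<forall>e\<in>\<Sigma>. well_formed_eq ar e \<and> balanced e"
  shows "has_idem_pols_satisfying (ext_vertices V i j) (ext_edges V E i j) ar \<Sigma>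
     \<longleftrightarrow> has_idem_pols_satisfying V E ar \<Sigma>"
  using has_idem_pols_satisfying_restrict has_idem_pols_satisfying_extend[OF _ assms(4,5)]
  by (rule iffI)

end
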